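(* Let $(g,f)$ be a Riordan matrix that possesses a type-I $B$-sequence, let $(a_j)_{j\ge0}$ be its $A$-sequence, and write $f(t)=\sum_{j\ge0}f_jt^j$. Then $a_0=1$ and $a_2=0$; equivalently, $f_1=1$ and $f_3=f_2^2$.
   Context: Let $K$ be $\mathbb{R}$ or $\mathbb{C}$. A (proper) Riordan matrix is a pair $(g,f)$ of formal power series in $K[[t]]$ with $g(0)=1$, $f(0)=0$, $f'(0)\neq 0$, identified with the infinite lower triangular matrix $(d_{n,k})_{n,k\ge0}$, $d_{n,k}=[t^n]g(t)f(t)^k$; we set $d_{n,k}=0$ if $n<0$, $k<0$ or $k>n$. The $A$-sequence $(a_j)_{j\ge0}$ of $(g,f)$ is the unique sequence whose generating function $A(t)=\sum_j a_jt^j$ satisfies $f(t)=tA(f(t))$. A type-I $B$-sequence of $(g,f)$ is a sequence $(b_j)_{j\ge0}$ such that $d_{n+1,k}=d_{n,k-1}+\sum_{j\ge0}b_j d_{n-j,k+j}$ for all $n\ge0$ and $k\ge1$. *)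

theory Defs
  imports "HOL-Computational_Algebra.Formal_Power_Series"
begin

definition riordan :: "'a::field fps \<Rightarrow> 'a fps \<Rightarrow> bool" where
  "riordan g f \<longleftrightarrow> fps_nth g 0 = 1 \<and> fps_nth f 0 = 0 \<and> fps_nth f 1 \<noteq> 0"

text \<open>Entry d_{n,k} = [t^n] g f^k (for nonnegative indices; it vanishes for k > n
  automatically because f(0) = 0; entries with negative indices are 0 and never arise below).\<close>
definition riordan_entry :: "'a::field fps \<Rightarrow> 'a fps \<Rightarrow> nat \<Rightarrow> nat \<Rightarrow> 'a" where
  "riordan_entry g f n k = fps_nth (g * f ^ k) n"

definition is_A_sequence :: "'a::field fps \<Rightarrow> 'a fps \<Rightarrow> bool" where
  "is_A_sequence f A \<longleftrightarrow> f = fps_X * fps_compose A f"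

text \<open>Type-I B-sequence: d_{n+1,k} = d_{n,k-1} + sum_j b_j d_{n-j,k+j} for n >= 0, k >= 1.
  Terms with j > n vanish since d_{n-j,.} = 0 for negative row index, so the sum is
  truncated to j <= n.\<close>
definition is_typeI_B_sequence :: "'a::field fps \<Rightarrow> 'a fps \<Rightarrow> (nat \<Rightarrow> 'a) \<Rightarrow> bool" where
  "is_typeI_B_sequence g f b \<longleftrightarrow>
     (\<forall>n k. 1 \<le> k \<longrightarrow>
        riordan_entry g f (n + 1) k =
          riordan_entry g f n (k - 1) + (\<Sum>j\<le>n. b j * riordan_entry g f (n - j) (k + j)))"

definition has_typeI_B_sequence :: "'a::field fps \<Rightarrow> 'a fps \<Rightarrow> bool" where
  "has_typeI_B_sequence g f \<longleftrightarrow> (\<exists>b. is_typeI_B_sequence g f b)"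

end

theory Submission
  imports Defs
begin

unbundle fps_syntax

(* Read the type-I recurrence in column 1 for rows 1, 2, 3. Since f(0) = 0, the entries
   strictly above the diagonal vanish, and the three equations successively give f_1 = 1,
   b_0 = f_2 and f_3 = b_0 f_2 = f_2^2. On the other hand, comparing the coefficients of
   t, t^2, t^3 in f = t A(f) gives a_0 = f_1, a_1 f_1 = f_2 and f_3 = a_1 f_2 + a_2 f_1^2,
   hence a_0 = 1 and a_2 = f_3 - f_2^2 = 0. *)

lemma riordan_entry_above_diagonal:
  fixes g f :: "'a::field fps"
  assumes "f $ 0 = 0" and "n < k"
  shows "riordan_entry g f n k = 0"
proof -
  have "f ^ k $ (n - i) = 0" for i
    using startsby_zero_power_prefix[OF assms(1)] assms(2) by simp
  then show ?thesis
    by (simp add: riordan_entry_def fps_mult_nth)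
qed

lemma typeI_B_sequence_column_1:
  assumes "is_typeI_B_sequence g f b"
  shows "(g * f) $ Suc n = g $ n + (\<Sum>j\<le>n. b j * riordan_entry g f (n - j) (Suc j))"
  using assms[unfolded is_typeI_B_sequence_def, rule_format, of 1 n]
  by (simp add: riordan_entry_def)

lemma riordan_typeI_B_sequence_nth_1:
  fixes g f :: "'a::field fps"
  assumes "riordan g f" and "is_typeI_B_sequence g f b"
  shows "f $ 1 = 1"
  using typeI_B_sequence_column_1[OF assms(2), of 0] assms(1)
  by (simp add: riordan_def riordan_entry_def fps_mult_nth)

lemma riordan_typeI_B_sequence_nth_3:
  fixes g f :: "'a::field fps"
  assumes riordan: "riordan g f" and B: "is_typeI_B_sequence g f b"
  shows "f $ 3 = (f $ 2)\<^sup>2"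
proof -
  have g0: "g $ 0 = 1" and f0: "f $ 0 = 0"
    using riordan by (auto simp: riordan_def)
  have f1: "f $ 1 = 1"
    using riordan B by (rule riordan_typeI_B_sequence_nth_1)
  have above: "riordan_entry g f n k = 0" if "n < k" for n k
    using f0 that by (rule riordan_entry_above_diagonal)
  have "(g * f) $ 2 = g $ 1 + b 0 * (g * f) $ 1"
    using typeI_B_sequence_column_1[OF B, of 1] above[of 0 2]
    by (simp add: riordan_entry_def numeral_2_eq_2)
  then have b0: "b 0 = f $ 2"
    using g0 f0 f1 by (simp add: fps_mult_nth numeral_2_eq_2)
  have "(g * f) $ 3 = g $ 2 + b 0 * (g * f) $ 2"
    using typeI_B_sequence_column_1[OF B, of 2] above[of 1 2] above[of 0 3]
    by (simp add: riordan_entry_def numeral_2_eq_2 numeral_3_eq_3)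
  then show ?thesis
    using g0 f0 f1 b0
    by (simp add: fps_mult_nth numeral_2_eq_2 numeral_3_eq_3 power2_eq_square algebra_simps)
qed

lemma A_sequence_nth_Suc:
  assumes "is_A_sequence f A"
  shows "f $ Suc n = (A oo f) $ n"
  using arg_cong[OF assms[unfolded is_A_sequence_def], of "\<lambda>h. h $ Suc n"]
  by (simp only: fps_X_mult_nth) simp

lemma A_sequence_low_coeffs:
  fixes f A :: "'a::field fps"
  assumes "is_A_sequence f A"
  shows "A $ 0 = f $ 1"
    and "A $ 1 * f $ 1 = f $ 2"
    and "A $ 1 * f $ 2 + A $ 2 * (f $ 1)\<^sup>2 = f $ 3"
proof -
  have f0: "f $ 0 = 0"
    using arg_cong[OF assms[unfolded is_A_sequence_def], of "\<lambda>h. h $ 0"] by simp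
  show "A $ 0 = f $ 1"
    using A_sequence_nth_Suc[OF assms, of 0] by simp
  show "A $ 1 * f $ 1 = f $ 2"
    using A_sequence_nth_Suc[OF assms, of 1] f0
    by (simp add: fps_compose_nth numeral_2_eq_2)
  show "A $ 1 * f $ 2 + A $ 2 * (f $ 1)\<^sup>2 = f $ 3"
    using A_sequence_nth_Suc[OF assms, of 2] f0
    by (simp add: fps_compose_nth numeral_2_eq_2 numeral_3_eq_3 power2_eq_square fps_mult_nth)
qed

lemma riordan_typeI_B_sequence_A_sequence:
  fixes g f A :: "'a::field fps"
  assumes "riordan g f" and "has_typeI_B_sequence g f" and "is_A_sequence f A"
  shows "A $ 0 = 1 \<and> A $ 2 = 0 \<and> f $ 1 = 1 \<and> f $ 3 = (f $ 2)\<^sup>2"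
proof -
  obtain b where B: "is_typeI_B_sequence g f b"
    using assms(2) by (auto simp: has_typeI_B_sequence_def)
  have f1: "f $ 1 = 1" and f3: "f $ 3 = (f $ 2)\<^sup>2"
    using assms(1) B by (rule riordan_typeI_B_sequence_nth_1, rule riordan_typeI_B_sequence_nth_3)
  show ?thesis
    using A_sequence_low_coeffs[OF assms(3)] f1 f3 by (simp add: power2_eq_square)
qed

theorem theorem2p2:
  shows "(\<forall>(g::real fps) (f::real fps) A.
            riordan g f \<and> has_typeI_B_sequence g f \<and> is_A_sequence f A \<longrightarrow>
            fps_nth A 0 = 1 \<and> fps_nth A 2 = 0 \<and>
            fps_nth f 1 = 1 \<and> fps_nth f 3 = (fps_nth f 2)\<^sup>2)
       \<and> (\<forall>(g::complex fps) (f::complex fps) A.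
            riordan g f \<and> has_typeI_B_sequence g f \<and> is_A_sequence f A \<longrightarrow>
            fps_nth A 0 = 1 \<and> fps_nth A 2 = 0 \<and>
            fps_nth f 1 = 1 \<and> fps_nth f 3 = (fps_nth f 2)\<^sup>2)"
  using riordan_typeI_B_sequence_A_sequence by (metis (no_types))

end
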